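(* Let $0<p<1$, $q=1-p$, let $\{X_i,i\geq 1\}$ be independent with $P\{X_i=1\}=p$, $P\{X_i=0\}=q$, and let $K,m\in\mathbb N$. Then $$P\big(M_{2K}^{(m)}\geq K-1\big)=\begin{cases}(K+2)(pq)^{K/2}-2(pq)^K, & \text{if } K \text{ is even},\\ (K+1-2Kpq)(pq)^{\frac{K-1}{2}}-(1-2pq)(pq)^{K-1}, & \text{if } K \text{ is odd}.\end{cases}$$
   Context: For $m,n\in\mathbb N$ let $S_n^{(m)}:=\sum_{i=m+1}^{n+m-1}\big[(1-X_{i-1})X_i+X_{i-1}(1-X_i)\big]$ be the number of switches among $X_m,\ldots,X_{m+n-1}$. For $m,N\in\mathbb N$ and $n=1,\ldots,N$ let $H_{m,n}^{(N)}:=\bigcup_{i=m}^{m+N-n+1}\{S_n^{(i)}=n-1\}$, and $M_N^{(m)}:=\max_{1\leq n\leq N}\{n-1 : H_{m,n}^{(N)}\neq\emptyset\}$ (length of the longest consecutive switches in $X_m,\ldots,X_{m+N-1}$). *)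

theory Defs
  imports "HOL-Probability.Probability"
begin

definition switches :: "(nat \<Rightarrow> nat) \<Rightarrow> nat \<Rightarrow> nat \<Rightarrow> nat" where
  "switches x m n = (\<Sum>i\<in>{m+1..n+m-1}. (1 - x (i-1)) * x i + x (i-1) * (1 - x i))"

definition H_event :: "(nat \<Rightarrow> nat) \<Rightarrow> nat \<Rightarrow> nat \<Rightarrow> nat \<Rightarrow> bool" where
  "H_event x m n N = (\<exists>i\<in>{m..m+N-n}. switches x i n = n - 1)"

definition longest_switches :: "(nat \<Rightarrow> nat) \<Rightarrow> nat \<Rightarrow> nat \<Rightarrow> nat" where
  "longest_switches x m N = Max {n - 1 | n. 1 \<le> n \<and> n \<le> N \<and> H_event x m n N}"

end

theory Submission
  imports Defs
begin

(* The event {M_2K >= K - 1} says that one of the K + 1 windows of length K inside the 2K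
   observed positions alternates; window i consists of the positions m + i, ..., m + i + K - 1.
   Split the event according to the first alternating window i.
   For i = 0 this is just the alternating event, of probability 2 (pq)^(K/2) for even K and
   (pq)^((K-1)/2) for odd K. For 0 < i < K, window i is the first one exactly when it
   alternates and positions i - 1 and i agree, since every earlier window overlapping it
   contains that pair; for i = K the window 0, which does not contain the pair, must be
   removed separately. Each event involved says that a block of positions follows one of two
   complementary 0/1 patterns, so by independence its probability is a sum of two products of
   p's and q's, and adding up the K + 1 terms gives the formula. *)

definition alternates :: "(nat \<Rightarrow> nat) \<Rightarrow> nat \<Rightarrow> nat \<Rightarrow> bool" where
  "alternates x a L \<longleftrightarrow> (\<forall>j. a \<le> j \<longrightarrow> j + 1 < a + L \<longrightarrow> x j \<noteq> x (j + 1))"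

lemma alternates_mono: "alternates x a L' \<Longrightarrow> L \<le> L' \<Longrightarrow> alternates x a L"
  unfolding alternates_def by auto

lemma alternates_trivial: "L \<le> 1 \<Longrightarrow> alternates x a L"
  unfolding alternates_def by auto

lemma alternates_cong:
  "(\<And>j. j \<in> {a..<a + L} \<Longrightarrow> x j = y j) \<Longrightarrow> alternates x a L \<longleftrightarrow> alternates y a L"
  unfolding alternates_def by (intro all_cong imp_cong refl) auto

lemma alternates_iff_bounded:
  "alternates x a L \<longleftrightarrow> (\<forall>j\<in>{a..<a + L - 1}. x j \<noteq> x (j + 1))"
  unfolding alternates_def by auto

lemma alternates_shift: "alternates (\<lambda>j. x (m + j)) i L \<longleftrightarrow> alternates x (m + i) L"
  unfolding alternates_def
proof (intro iffI allI impI)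
  fix j assume H: "\<forall>j. i \<le> j \<longrightarrow> j + 1 < i + L \<longrightarrow> x (m + j) \<noteq> x (m + (j + 1))"
    and "m + i \<le> j" "j + 1 < m + i + L"
  then show "x j \<noteq> x (j + 1)" using H[rule_format, of "j - m"] by simp
next
  fix j assume H: "\<forall>j. m + i \<le> j \<longrightarrow> j + 1 < m + i + L \<longrightarrow> x j \<noteq> x (j + 1)"
    and "i \<le> j" "j + 1 < i + L"
  then show "x (m + j) \<noteq> x (m + (j + 1))" using H[rule_format, of "m + j"] by simp
qed

lemma switches_eq_card:
  assumes "\<forall>j\<in>{i..<i + n}. x j \<le> 1"
  shows "switches x i n = card {j \<in> {i + 1..n + i - 1}. x (j - 1) \<noteq> x j}"
proof -
  have "switches x i n = (\<Sum>j\<in>{i + 1..n + i - 1}. if x (j - 1) \<noteq> x j then 1 else 0)"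
    unfolding switches_def
  proof (rule sum.cong)
    fix j assume "j \<in> {i + 1..n + i - 1}"
    then have "j - 1 \<in> {i..<i + n}" "j \<in> {i..<i + n}" by auto
    then have "x (j - 1) \<le> 1" "x j \<le> 1" using assms by blast+
    then show "(1 - x (j - 1)) * x j + x (j - 1) * (1 - x j) = (if x (j - 1) \<noteq> x j then 1 else 0)"
      by (auto simp: le_Suc_eq)
  qed simp
  then show ?thesis by (simp add: sum.If_cases Int_def conj_assoc)
qed

lemma switches_eq_iff_alternates:
  assumes "\<forall>j\<in>{i..<i + n}. x j \<le> 1"
  shows "switches x i n = n - 1 \<longleftrightarrow> alternates x i n"
proof -
  let ?A = "{i + 1..n + i - 1}"
  have "switches x i n = n - 1 \<longleftrightarrow> card {j \<in> ?A. x (j - 1) \<noteq> x j} = card ?A"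
    using switches_eq_card[OF assms] by simp
  also have "\<dots> \<longleftrightarrow> {j \<in> ?A. x (j - 1) \<noteq> x j} = ?A"
    by (rule iffI, rule card_subset_eq) auto
  also have "\<dots> \<longleftrightarrow> (\<forall>j\<in>?A. x (j - 1) \<noteq> x j)" by blast
  also have "\<dots> \<longleftrightarrow> alternates x i n"
    unfolding alternates_def
  proof (intro iffI allI impI)
    fix j assume H: "\<forall>j\<in>?A. x (j - 1) \<noteq> x j" and "i \<le> j" "j + 1 < i + n"
    then have "j + 1 \<in> ?A" by auto
    then show "x j \<noteq> x (j + 1)" using H by fastforce
  next
    fix j assume H: "\<forall>j. i \<le> j \<longrightarrow> j + 1 < i + n \<longrightarrow> x j \<noteq> x (j + 1)"
    show "\<forall>j\<in>?A. x (j - 1) \<noteq> x j"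
    proof
      fix j assume "j \<in> ?A"
      then have "i \<le> j - 1" "j - 1 + 1 < i + n" "j - 1 + 1 = j" by auto
      then show "x (j - 1) \<noteq> x j" using H by metis
    qed
  qed
  finally show ?thesis .
qed

lemma switches_cong: "(\<And>j. i \<le> j \<Longrightarrow> x j = y j) \<Longrightarrow> switches x i n = switches y i n"
  unfolding switches_def by (rule sum.cong) auto

lemma longest_switches_cong:
  assumes "\<And>j. m \<le> j \<Longrightarrow> x j = y j"
  shows "longest_switches x m N = longest_switches y m N"
proof -
  have "switches x i n = switches y i n" if "m \<le> i" for i n
    using assms that by (intro switches_cong) auto
  then have "H_event x m n N = H_event y m n N" for n
    unfolding H_event_def by (intro bex_cong refl) auto
  then show ?thesis unfolding longest_switches_def by simp
qed

lemma H_event_1: "1 \<le> N \<Longrightarrow> H_event x m 1 N"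
  unfolding H_event_def switches_def by (rule bexI[of _ m]) auto

lemma longest_switches_ge_iff_H_event:
  assumes "1 \<le> K"
  shows "K - 1 \<le> longest_switches x m (2 * K) \<longleftrightarrow>
    (\<exists>n. K \<le> n \<and> n \<le> 2 * K \<and> H_event x m n (2 * K))"
proof -
  let ?S = "{n - 1 | n. 1 \<le> n \<and> n \<le> 2 * K \<and> H_event x m n (2 * K)}"
  have "?S \<subseteq> (\<lambda>n. n - 1) ` {1..2 * K}" by auto
  then have "finite ?S" by (rule finite_subset) simp
  moreover have "?S \<noteq> {}" using H_event_1[of "2 * K" x m] assms by force
  ultimately have "K - 1 \<le> Max ?S \<longleftrightarrow> (\<exists>s\<in>?S. K - 1 \<le> s)" by (rule Max_ge_iff)
  also have "\<dots> \<longleftrightarrow> (\<exists>n. K \<le> n \<and> n \<le> 2 * K \<and> H_event x m n (2 * K))"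
  proof
    assume "\<exists>s\<in>?S. K - 1 \<le> s"
    then obtain n where "1 \<le> n" "n \<le> 2 * K" "H_event x m n (2 * K)" "K - 1 \<le> n - 1" by blast
    then show "\<exists>n. K \<le> n \<and> n \<le> 2 * K \<and> H_event x m n (2 * K)"
      using assms by (intro exI[of _ n]) auto
  next
    assume "\<exists>n. K \<le> n \<and> n \<le> 2 * K \<and> H_event x m n (2 * K)"
    then obtain n where "K \<le> n" "n \<le> 2 * K" "H_event x m n (2 * K)" by blast
    then show "\<exists>s\<in>?S. K - 1 \<le> s" using assms by (intro bexI[of _ "n - 1"]) auto
  qed
  finally show ?thesis unfolding longest_switches_def .
qed

lemma longest_switches_ge_iff_alternates:
  assumes "1 \<le> K" and bits: "\<forall>j<2 * K. x (m + j) \<le> 1"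
  shows "K - 1 \<le> longest_switches x m (2 * K) \<longleftrightarrow> (\<exists>i\<le>K. alternates (\<lambda>j. x (m + j)) i K)"
proof -
  have window_bits: "\<forall>j\<in>{i..<i + n}. x j \<le> 1" if "m \<le> i" "i + n \<le> m + 2 * K" for i n
  proof
    fix j assume "j \<in> {i..<i + n}"
    then have "j - m < 2 * K" "m + (j - m) = j" using that by auto
    then show "x j \<le> 1" using bits by metis
  qed
  have "K - 1 \<le> longest_switches x m (2 * K) \<longleftrightarrow>
      (\<exists>n. K \<le> n \<and> n \<le> 2 * K \<and> H_event x m n (2 * K))"
    by (rule longest_switches_ge_iff_H_event[OF assms(1)])
  also have "\<dots> \<longleftrightarrow> (\<exists>i\<le>K. alternates x (m + i) K)"
  proof
    assume "\<exists>n. K \<le> n \<and> n \<le> 2 * K \<and> H_event x m n (2 * K)"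
    then obtain n i where n: "K \<le> n" "n \<le> 2 * K" and i: "m \<le> i" "i \<le> m + 2 * K - n"
      and sw: "switches x i n = n - 1"
      unfolding H_event_def by auto
    have "i + n \<le> m + 2 * K" using i n by simp
    then have "alternates x i n" using switches_eq_iff_alternates window_bits i(1) sw by blast
    then have "alternates x (m + (i - m)) K" using alternates_mono n i by simp
    then show "\<exists>i\<le>K. alternates x (m + i) K" using i n by (intro exI[of _ "i - m"]) auto
  next
    assume "\<exists>i\<le>K. alternates x (m + i) K"
    then obtain i where i: "i \<le> K" "alternates x (m + i) K" by blast
    moreover have "\<forall>j\<in>{m + i..<m + i + K}. x j \<le> 1" using window_bits[of "m + i" K] i(1) by simp
    ultimately have "switches x (m + i) K = K - 1" using switches_eq_iff_alternates by blast
    then have "H_event x m K (2 * K)" unfolding H_event_def using i by (intro bexI[of _ "m + i"]) auto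
    then show "\<exists>n. K \<le> n \<and> n \<le> 2 * K \<and> H_event x m n (2 * K)" by auto
  qed
  also have "\<dots> \<longleftrightarrow> (\<exists>i\<le>K. alternates (\<lambda>j. x (m + j)) i K)"
    by (simp only: alternates_shift)
  finally show ?thesis .
qed

lemma alternates_iff_parity:
  assumes bits: "\<forall>j\<in>{a..<a + L}. y j \<le> 1"
  shows "alternates y a L \<longleftrightarrow> (\<exists>c\<le>1. \<forall>j\<in>{a..<a + L}. y j = (c + j) mod 2)"
proof
  assume alt: "alternates y a L"
  define c where "c = (y a + a) mod 2"
  have "j < a + L \<longrightarrow> y j = (c + j) mod 2" if "a \<le> j" for j
    using that
  proof (induction j rule: nat_induct_at_least)
    case base
    show ?case
    proof
      assume "a < a + L"
      then have "y a \<le> 1" using bits by simp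
      then show "y a = (c + a) mod 2" unfolding c_def by presburger
    qed
  next
    case (Suc j)
    show ?case
    proof
      assume "Suc j < a + L"
      then have "y j = (c + j) mod 2" "y j \<noteq> y (Suc j)" "y j \<le> 1" "y (Suc j) \<le> 1"
        using Suc alt bits unfolding alternates_def by auto
      then show "y (Suc j) = (c + Suc j) mod 2" by presburger
    qed
  qed
  moreover have "c \<le> 1" unfolding c_def by simp
  ultimately show "\<exists>c\<le>1. \<forall>j\<in>{a..<a + L}. y j = (c + j) mod 2"
    by (intro exI[of _ c]) auto
next
  assume "\<exists>c\<le>1. \<forall>j\<in>{a..<a + L}. y j = (c + j) mod 2"
  then obtain c where c: "\<forall>j\<in>{a..<a + L}. y j = (c + j) mod 2" by blast
  show "alternates y a L"
    unfolding alternates_def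
  proof (intro allI impI)
    fix j assume "a \<le> j" "j + 1 < a + L"
    then have "y j = (c + j) mod 2" "y (j + 1) = (c + (j + 1)) mod 2" using c by auto
    then show "y j \<noteq> y (j + 1)" by presburger
  qed
qed

lemma alternates_join_iff:
  assumes "1 \<le> L1" "1 \<le> L2"
  shows "alternates y a L1 \<and> y (a + L1 - 1) = y (a + L1) \<and> alternates y (a + L1) L2 \<longleftrightarrow>
    (\<forall>j. a \<le> j \<longrightarrow> j + 1 < a + (L1 + L2) \<longrightarrow>
      (if j + 1 = a + L1 then y j = y (j + 1) else y j \<noteq> y (j + 1)))"
  unfolding alternates_def
proof (intro iffI conjI allI impI; (elim conjE)?)
  fix j assume first: "\<forall>j. a \<le> j \<longrightarrow> j + 1 < a + L1 \<longrightarrow> y j \<noteq> y (j + 1)"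
    and join: "y (a + L1 - 1) = y (a + L1)"
    and second: "\<forall>j. a + L1 \<le> j \<longrightarrow> j + 1 < a + L1 + L2 \<longrightarrow> y j \<noteq> y (j + 1)"
    and j: "a \<le> j" "j + 1 < a + (L1 + L2)"
  show "if j + 1 = a + L1 then y j = y (j + 1) else y j \<noteq> y (j + 1)"
  proof (cases "j + 1 = a + L1")
    case True
    then have "j = a + L1 - 1" by simp
    then show ?thesis using True join by simp
  next
    case False
    then show ?thesis using first second j by (cases "j + 1 < a + L1") auto
  qed
next
  assume H: "\<forall>j. a \<le> j \<longrightarrow> j + 1 < a + (L1 + L2) \<longrightarrow>
    (if j + 1 = a + L1 then y j = y (j + 1) else y j \<noteq> y (j + 1))"
  show "y (a + L1 - 1) = y (a + L1)" using H[rule_format, of "a + L1 - 1"] assms by simp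
  show "y j \<noteq> y (j + 1)" if "a \<le> j" "j + 1 < a + L1" for j
    using H[rule_format, of j] that by simp
  show "y j \<noteq> y (j + 1)" if "a + L1 \<le> j" "j + 1 < a + L1 + L2" for j
    using H[rule_format, of j] that by simp
qed

lemma alternates_join_iff_parity:
  assumes "1 \<le> L1" "1 \<le> L2" and bits: "\<forall>j\<in>{a..<a + L1 + L2}. y j \<le> 1"
  shows "alternates y a L1 \<and> y (a + L1 - 1) = y (a + L1) \<and> alternates y (a + L1) L2 \<longleftrightarrow>
    (\<exists>c\<le>1. \<forall>j\<in>{a..<a + L1 + L2}. y j = (if j < a + L1 then (c + j) mod 2 else (c + 1 + j) mod 2))"
proof -
  \<comment> \<open>Flipping the bits of the second block turns the two blocks into one alternating window.\<close>
  define z where "z j = (if j < a + L1 then y j else 1 - y j)" for j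
  have z_bits: "\<forall>j\<in>{a..<a + (L1 + L2)}. z j \<le> 1" using bits unfolding z_def by auto
  have step: "(if j + 1 = a + L1 then y j = y (j + 1) else y j \<noteq> y (j + 1)) \<longleftrightarrow> z j \<noteq> z (j + 1)"
    if "a \<le> j" "j + 1 < a + (L1 + L2)" for j
  proof -
    have "y j \<le> 1" "y (j + 1) \<le> 1" using bits that by auto
    then show ?thesis unfolding z_def by (auto simp: le_Suc_eq)
  qed
  have "alternates y a L1 \<and> y (a + L1 - 1) = y (a + L1) \<and> alternates y (a + L1) L2 \<longleftrightarrow>
      alternates z a (L1 + L2)"
    unfolding alternates_join_iff[OF assms(1,2)] unfolding alternates_def
    by (intro all_cong imp_cong refl) (rule step)
  also have "\<dots> \<longleftrightarrow> (\<exists>c\<le>1. \<forall>j\<in>{a..<a + (L1 + L2)}. z j = (c + j) mod 2)"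
    by (rule alternates_iff_parity[OF z_bits])
  also have "\<dots> \<longleftrightarrow>
      (\<exists>c\<le>1. \<forall>j\<in>{a..<a + L1 + L2}. y j = (if j < a + L1 then (c + j) mod 2 else (c + 1 + j) mod 2))"
  proof -
    have "z j = (c + j) mod 2 \<longleftrightarrow> y j = (if j < a + L1 then (c + j) mod 2 else (c + 1 + j) mod 2)"
      if "j \<in> {a..<a + L1 + L2}" for c j
    proof -
      have "y j \<le> 1" using bits that by blast
      then show ?thesis unfolding z_def by (cases "j < a + L1") (simp, presburger)
    qed
    then show ?thesis by (intro ex_cong1 conj_cong refl ball_cong) (simp_all add: add.assoc)
  qed
  finally show ?thesis .
qed

lemma first_alternating_window_iff:
  assumes "1 \<le> i" "1 \<le> K"
  shows "alternates y i K \<and> (\<forall>i'<i. \<not> alternates y i' K) \<longleftrightarrow>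
    alternates y i K \<and> y (i - 1) = y i \<and> (\<forall>i'. i' + K \<le> i \<longrightarrow> \<not> alternates y i' K)"
proof -
  have repeat: "y (i - 1) = y i" if alt: "alternates y i K" and not_alt: "\<not> alternates y (i - 1) K"
  proof -
    obtain j where j: "i - 1 \<le> j" "j + 1 < i - 1 + K" "y j = y (j + 1)"
      using not_alt unfolding alternates_def by blast
    have "j = i - 1"
    proof (rule ccontr)
      assume "j \<noteq> i - 1"
      then have "i \<le> j" "j + 1 < i + K" using j assms by auto
      then show False using alt j(3) unfolding alternates_def by blast
    qed
    then show ?thesis using j(3) assms by simp
  qed
  have no_repeat: "y (i - 1) \<noteq> y i" if "alternates y i' K" "i' < i" "i < i' + K" for i'
  proof -
    have "i' \<le> i - 1" "i - 1 + 1 < i' + K" "i - 1 + 1 = i" using that assms by auto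
    then show ?thesis using that(1) unfolding alternates_def by metis
  qed
  show ?thesis
  proof
    assume first: "alternates y i K \<and> (\<forall>i'<i. \<not> alternates y i' K)"
    then have "y (i - 1) = y i" using repeat assms(1) by simp
    moreover have "\<not> alternates y i' K" if "i' + K \<le> i" for i' using first that assms(2) by simp
    ultimately show "alternates y i K \<and> y (i - 1) = y i \<and> (\<forall>i'. i' + K \<le> i \<longrightarrow> \<not> alternates y i' K)"
      using first by blast
  next
    assume joined: "alternates y i K \<and> y (i - 1) = y i \<and> (\<forall>i'. i' + K \<le> i \<longrightarrow> \<not> alternates y i' K)"
    have "\<not> alternates y i' K" if "i' < i" for i'
      using joined no_repeat[of i'] that by (cases "i' + K \<le> i") auto
    then show "alternates y i K \<and> (\<forall>i'<i. \<not> alternates y i' K)" using joined by blast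
  qed
qed

lemma prod_parity_pattern:
  fixes w :: "nat \<Rightarrow> 'b::comm_monoid_mult"
  shows "(\<Prod>j\<in>{a..<a + L}. w ((c + j) mod 2)) =
    (w 0 * w 1) ^ (L div 2) * (if odd L then w ((c + a) mod 2) else 1)"
proof (induction L)
  case (Suc L)
  have split: "(\<Prod>j\<in>{a..<a + Suc L}. w ((c + j) mod 2)) =
      (\<Prod>j\<in>{a..<a + L}. w ((c + j) mod 2)) * w ((c + a + L) mod 2)"
    by (simp add: add.assoc)
  show ?case
  proof (cases "odd L")
    case True
    have "(c + a) mod 2 = 0 \<and> (c + a + L) mod 2 = 1 \<or> (c + a) mod 2 = 1 \<and> (c + a + L) mod 2 = 0"
      using True by presburger
    then have pair: "w ((c + a) mod 2) * w ((c + a + L) mod 2) = w 0 * w 1" by (auto simp: mult.commute)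
    have "(\<Prod>j\<in>{a..<a + Suc L}. w ((c + j) mod 2)) =
        (w 0 * w 1) ^ (L div 2) * (w ((c + a) mod 2) * w ((c + a + L) mod 2))"
      unfolding split Suc.IH using True by (simp add: mult.assoc)
    also have "\<dots> = (w 0 * w 1) ^ Suc (L div 2)" unfolding pair by (simp add: mult.commute)
    also have "Suc (L div 2) = Suc L div 2" using True by presburger
    finally show ?thesis using True by simp
  next
    case False
    then have "(c + a + L) mod 2 = (c + a) mod 2" "Suc L div 2 = L div 2" "odd (Suc L)" by presburger+
    then show ?thesis using False unfolding split Suc.IH by simp
  qed
qed simp

lemma sum_parity_shift: "f ((0 + a) mod 2) + f ((1 + a) mod 2) = f 0 + f (1::nat)"
  for f :: "nat \<Rightarrow> real"
proof (cases "even a")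
  case True
  then have "(0 + a) mod 2 = 0" "(1 + a) mod 2 = 1" by presburger+
  then show ?thesis by (simp only:)
next
  case False
  then have "(0 + a) mod 2 = 1" "(1 + a) mod 2 = 0" by presburger+
  then show ?thesis by (simp only:)
qed

lemma (in prob_space) indep_sets_reindex:
  assumes "inj_on h I" "indep_sets F (h ` I)"
  shows "indep_sets (\<lambda>i. F (h i)) I"
proof (rule indep_setsI)
  show "F (h i) \<subseteq> events" if "i \<in> I" for i
    using assms(2) that unfolding indep_sets_def by blast
next
  fix A J assume J: "J \<noteq> {}" "J \<subseteq> I" "finite J" "\<forall>j\<in>J. A j \<in> F (h j)"
  have inj: "inj_on h J" using assms(1) J(2) by (rule inj_on_subset)
  define B where "B k = A (the_inv_into J h k)" for k
  have B: "B (h j) = A j" if "j \<in> J" for j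
    unfolding B_def using inj that by (simp add: the_inv_into_f_f)
  have "prob (\<Inter>k\<in>h ` J. B k) = (\<Prod>k\<in>h ` J. prob (B k))"
    using J B by (intro indep_setsD[OF assms(2)]) auto
  then show "prob (\<Inter>j\<in>J. A j) = (\<Prod>j\<in>J. prob (A j))"
    using B by (simp add: prod.reindex[OF inj])
qed

lemma (in prob_space) indep_vars_reindex:
  assumes "inj_on h I" "indep_vars M' X (h ` I)"
  shows "indep_vars (\<lambda>i. M' (h i)) (\<lambda>i. X (h i)) I"
  using assms indep_sets_reindex[OF assms(1)] unfolding indep_vars_def by auto

lemma (in prob_space) AE_le_1:
  fixes X :: "'a \<Rightarrow> nat"
  assumes "X \<in> M \<rightarrow>\<^sub>M count_space UNIV"
    and "prob {\<omega> \<in> space M. X \<omega> = 0} + prob {\<omega> \<in> space M. X \<omega> = 1} = 1"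
  shows "AE \<omega> in M. X \<omega> \<le> 1"
proof -
  note assms(1)[measurable]
  have "{\<omega> \<in> space M. X \<omega> \<le> 1} = {\<omega> \<in> space M. X \<omega> = 0} \<union> {\<omega> \<in> space M. X \<omega> = 1}"
    by auto
  also have "prob \<dots> = 1"
    using assms(2) by (subst finite_measure_Union) auto
  finally have "prob {\<omega> \<in> space M. X \<omega> \<le> 1} = 1" .
  then have "AE \<omega> in M. \<omega> \<in> {\<omega> \<in> space M. X \<omega> \<le> 1}" by (rule AE_prob_1)
  then show ?thesis by (rule eventually_mono) simp
qed

locale bernoulli_sequence = prob_space M for M :: "'a measure" +
  fixes Y :: "nat \<Rightarrow> 'a \<Rightarrow> nat" and p q :: real
  assumes measurable_Y[measurable]: "Y j \<in> M \<rightarrow>\<^sub>M count_space UNIV"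
    and indep_Y: "indep_vars (\<lambda>_. count_space UNIV) Y UNIV"
    and Y_le_1: "Y j \<omega> \<le> 1"
    and prob_Y_eq_1: "prob {\<omega> \<in> space M. Y j \<omega> = 1} = p"
    and prob_Y_eq_0: "prob {\<omega> \<in> space M. Y j \<omega> = 0} = q"
begin

definition weight :: "nat \<Rightarrow> real" where
  "weight b = (if b = 1 then p else q)"

lemma p_plus_q: "p + q = 1"
proof -
  have "space M = {\<omega> \<in> space M. Y 0 \<omega> = 0} \<union> {\<omega> \<in> space M. Y 0 \<omega> = 1}"
    using Y_le_1[of 0] by (auto simp: le_Suc_eq)
  also have "prob \<dots> = q + p"
    using prob_Y_eq_0 prob_Y_eq_1 by (subst finite_measure_Union) auto
  finally show ?thesis using prob_space by simp
qed

lemma prob_pattern: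
  assumes "finite J" "\<And>j. j \<in> J \<Longrightarrow> c j \<le> 1"
  shows "prob {\<omega> \<in> space M. \<forall>j\<in>J. Y j \<omega> = c j} = (\<Prod>j\<in>J. weight (c j))"
proof (cases "J = {}")
  case False
  have "{\<omega> \<in> space M. \<forall>j\<in>J. Y j \<omega> = c j} = (\<Inter>j\<in>J. Y j -` {c j} \<inter> space M)"
    using False by auto
  then have "prob {\<omega> \<in> space M. \<forall>j\<in>J. Y j \<omega> = c j} = (\<Prod>j\<in>J. prob (Y j -` {c j} \<inter> space M))"
    using indep_varsD[OF indep_Y False assms(1)] by simp
  also have "\<dots> = (\<Prod>j\<in>J. weight (c j))"
  proof (rule prod.cong)
    fix j assume "j \<in> J"
    then have "c j = 0 \<or> c j = 1" using assms(2) by fastforce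
    moreover have "Y j -` {c j} \<inter> space M = {\<omega> \<in> space M. Y j \<omega> = c j}" by auto
    ultimately show "prob (Y j -` {c j} \<inter> space M) = weight (c j)"
      using prob_Y_eq_0 prob_Y_eq_1 unfolding weight_def by auto
  qed simp
  finally show ?thesis .
qed (simp add: prob_space)

lemma prob_either_pattern:
  fixes pat :: "nat \<Rightarrow> nat \<Rightarrow> nat"
  assumes "finite J" "j0 \<in> J" "pat 0 j0 \<noteq> pat 1 j0" "\<And>b j. j \<in> J \<Longrightarrow> pat b j \<le> 1"
  shows "prob {\<omega> \<in> space M. \<exists>b\<le>1. \<forall>j\<in>J. Y j \<omega> = pat b j} =
    (\<Prod>j\<in>J. weight (pat 0 j)) + (\<Prod>j\<in>J. weight (pat 1 j))"
proof -
  let ?C = "\<lambda>b. {\<omega> \<in> space M. \<forall>j\<in>J. Y j \<omega> = pat b j}"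
  have "{\<omega> \<in> space M. \<exists>b\<le>1. \<forall>j\<in>J. Y j \<omega> = pat b j} = ?C 0 \<union> ?C 1"
    by (auto simp: le_Suc_eq)
  moreover have "?C 0 \<inter> ?C 1 = {}" using assms(2,3) by auto
  ultimately have "prob {\<omega> \<in> space M. \<exists>b\<le>1. \<forall>j\<in>J. Y j \<omega> = pat b j} = prob (?C 0) + prob (?C 1)"
    using assms(1) by (simp add: finite_measure_Union)
  then show ?thesis using prob_pattern assms(1,4) by simp
qed

definition alternating_event :: "nat \<Rightarrow> nat \<Rightarrow> 'a set" where
  "alternating_event a L = {\<omega> \<in> space M. alternates (\<lambda>j. Y j \<omega>) a L}"

definition double_alternating_event :: "nat \<Rightarrow> nat \<Rightarrow> nat \<Rightarrow> 'a set" where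
  "double_alternating_event a L1 L2 = {\<omega> \<in> space M. alternates (\<lambda>j. Y j \<omega>) a L1 \<and>
     Y (a + L1 - 1) \<omega> = Y (a + L1) \<omega> \<and> alternates (\<lambda>j. Y j \<omega>) (a + L1) L2}"

lemma pred_Y_eq_Y[measurable]: "Measurable.pred M (\<lambda>\<omega>. Y j \<omega> = Y k \<omega>)"
proof -
  \<comment> \<open>The measurability prover only compares random variables with constants.\<close>
  have "(\<lambda>\<omega>. Y j \<omega> = Y k \<omega>) = (\<lambda>\<omega>. \<exists>v::nat. Y j \<omega> = v \<and> Y k \<omega> = v)" by auto
  then show ?thesis by (simp only:) measurable
qed

lemma alternating_event_sets[measurable]: "alternating_event a L \<in> events"
  unfolding alternating_event_def alternates_iff_bounded by measurable

lemma double_alternating_event_sets[measurable]: "double_alternating_event a L1 L2 \<in> events"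
  unfolding double_alternating_event_def alternates_iff_bounded by measurable

lemma weight_sum: "weight 0 + weight 1 = 1"
  using p_plus_q unfolding weight_def by simp

lemma weight_prod: "weight 0 * weight 1 = p * q"
  unfolding weight_def by (simp add: mult.commute)

lemma prob_alternating_event:
  assumes "1 \<le> L"
  shows "prob (alternating_event a L) = (p * q) ^ (L div 2) * (if odd L then 1 else 2)"
proof -
  have "alternates (\<lambda>j. Y j \<omega>) a L \<longleftrightarrow> (\<exists>c\<le>1. \<forall>j\<in>{a..<a + L}. Y j \<omega> = (c + j) mod 2)" for \<omega>
    using Y_le_1 by (intro alternates_iff_parity) auto
  then have eq: "alternating_event a L =
      {\<omega> \<in> space M. \<exists>c\<le>1. \<forall>j\<in>{a..<a + L}. Y j \<omega> = (c + j) mod 2}"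
    unfolding alternating_event_def by simp
  have "(0 + a) mod 2 \<noteq> (1 + a) mod (2::nat)" by presburger
  then have "prob (alternating_event a L) =
      (\<Prod>j\<in>{a..<a + L}. weight ((0 + j) mod 2)) + (\<Prod>j\<in>{a..<a + L}. weight ((1 + j) mod 2))"
    unfolding eq using assms by (intro prob_either_pattern) auto
  also have "\<dots> = (weight 0 * weight 1) ^ (L div 2) *
      ((if odd L then weight ((0 + a) mod 2) else 1) + (if odd L then weight ((1 + a) mod 2) else 1))"
    unfolding prod_parity_pattern by (simp only: distrib_left)
  also have "\<dots> = (p * q) ^ (L div 2) * ((if odd L then weight 0 else 1) + (if odd L then weight 1 else 1))"
    by (simp only: sum_parity_shift[of "\<lambda>d. if odd L then weight d else 1"] weight_prod)
  finally show ?thesis using weight_sum by simp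
qed

lemma double_alternating_event_eq:
  assumes "1 \<le> L1" "1 \<le> L2"
  shows "double_alternating_event a L1 L2 = {\<omega> \<in> space M. \<exists>b\<le>1. \<forall>j\<in>{a..<a + L1 + L2}.
    Y j \<omega> = (if j < a + L1 then (b + j) mod 2 else (b + 1 + j) mod 2)}"
proof -
  have "alternates (\<lambda>j. Y j \<omega>) a L1 \<and> Y (a + L1 - 1) \<omega> = Y (a + L1) \<omega> \<and>
      alternates (\<lambda>j. Y j \<omega>) (a + L1) L2 \<longleftrightarrow>
      (\<exists>b\<le>1. \<forall>j\<in>{a..<a + L1 + L2}. Y j \<omega> = (if j < a + L1 then (b + j) mod 2 else (b + 1 + j) mod 2))"
    for \<omega>
    using Y_le_1 by (intro alternates_join_iff_parity assms) auto
  then show ?thesis unfolding double_alternating_event_def by simp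
qed

lemma prod_weight_double_pattern:
  "(\<Prod>j\<in>{a..<a + L1 + L2}. weight (if j < a + L1 then (b + j) mod 2 else (b + 1 + j) mod 2)) =
    (p * q) ^ (L1 div 2 + L2 div 2) * ((if odd L1 then weight ((b + a) mod 2) else 1) *
      (if odd L2 then weight (((b + a) mod 2 + 1 + L1) mod 2) else 1))"
  (is "(\<Prod>j\<in>_. weight (?pat j)) = _")
proof -
  have "(\<Prod>j\<in>{a..<a + L1}. weight (?pat j)) = (\<Prod>j\<in>{a..<a + L1}. weight ((b + j) mod 2))"
    by (rule prod.cong) simp_all
  also have "\<dots> = (p * q) ^ (L1 div 2) * (if odd L1 then weight ((b + a) mod 2) else 1)"
    by (simp only: prod_parity_pattern weight_prod)
  finally have first: "(\<Prod>j\<in>{a..<a + L1}. weight (?pat j)) = \<dots>" .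
  have parity: "(b + 1 + (a + L1)) mod 2 = ((b + a) mod 2 + 1 + L1) mod 2"
    unfolding add.assoc[of "(b + a) mod 2"] mod_add_left_eq by (simp only: add_ac)
  have "(\<Prod>j\<in>{a + L1..<a + L1 + L2}. weight (?pat j)) =
      (\<Prod>j\<in>{a + L1..<a + L1 + L2}. weight ((b + 1 + j) mod 2))"
    by (rule prod.cong) simp_all
  also have "\<dots> = (p * q) ^ (L2 div 2) * (if odd L2 then weight ((b + 1 + (a + L1)) mod 2) else 1)"
    by (simp only: prod_parity_pattern weight_prod)
  finally have second: "(\<Prod>j\<in>{a + L1..<a + L1 + L2}. weight (?pat j)) =
      (p * q) ^ (L2 div 2) * (if odd L2 then weight (((b + a) mod 2 + 1 + L1) mod 2) else 1)"
    unfolding parity .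
  have "(\<Prod>j\<in>{a..<a + L1 + L2}. weight (?pat j)) =
      (\<Prod>j\<in>{a..<a + L1}. weight (?pat j)) * (\<Prod>j\<in>{a + L1..<a + L1 + L2}. weight (?pat j))"
    by (rule prod.atLeastLessThan_concat[symmetric]) simp_all
  then show ?thesis unfolding first second power_add by (simp only: mult_ac)
qed

lemma sum_weight_double_pattern:
  "(if odd L1 then weight 0 else 1) * (if odd L2 then weight ((0 + 1 + L1) mod 2) else 1) +
   (if odd L1 then weight 1 else 1) * (if odd L2 then weight ((1 + 1 + L1) mod 2) else 1) =
   (if odd L1 \<and> odd L2 then p\<^sup>2 + q\<^sup>2 else if odd L1 \<or> odd L2 then 1 else 2)"
  (is "?lhs = _")
proof (cases "odd L1")
  case True
  then have "(0 + 1 + L1) mod 2 = 0" "(1 + 1 + L1) mod 2 = 1" by presburger+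
  then have "?lhs = weight 0 * (if odd L2 then weight 0 else 1) + weight 1 * (if odd L2 then weight 1 else 1)"
    using True by (simp only: not_False_eq_True if_True)
  then show ?thesis using True weight_sum
    by (cases "odd L2") (simp_all add: weight_def power2_eq_square)
next
  case False
  then have "(0 + 1 + L1) mod 2 = 1" "(1 + 1 + L1) mod 2 = 0" by presburger+
  then have "?lhs = (if odd L2 then weight 1 else 1) + (if odd L2 then weight 0 else 1)"
    using False by (simp only: not_True_eq_False if_False mult_1)
  then show ?thesis using False weight_sum by (cases "odd L2") simp_all
qed

lemma prob_double_alternating_event:
  assumes "1 \<le> L1" "1 \<le> L2"
  shows "prob (double_alternating_event a L1 L2) = (p * q) ^ (L1 div 2 + L2 div 2) *
    (if odd L1 \<and> odd L2 then p\<^sup>2 + q\<^sup>2 else if odd L1 \<or> odd L2 then 1 else 2)"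
proof -
  define pat where "pat b j = (if j < a + L1 then (b + j) mod 2 else (b + 1 + j) mod 2)" for b j :: nat
  define f where "f d = (if odd L1 then weight d else 1) *
    (if odd L2 then weight ((d + 1 + L1) mod 2) else 1)" for d
  have "pat 0 a \<noteq> pat 1 a" "pat b j \<le> 1" for b j
    unfolding pat_def using assms by (simp, presburger) auto
  then have "prob (double_alternating_event a L1 L2) =
      (\<Prod>j\<in>{a..<a + L1 + L2}. weight (pat 0 j)) + (\<Prod>j\<in>{a..<a + L1 + L2}. weight (pat 1 j))"
    unfolding double_alternating_event_eq[OF assms] pat_def[symmetric] using assms
    by (intro prob_either_pattern) auto
  also have "\<dots> = (p * q) ^ (L1 div 2 + L2 div 2) * (f ((0 + a) mod 2) + f ((1 + a) mod 2))"
    unfolding pat_def prod_weight_double_pattern f_def by (simp only: distrib_left)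
  also have "\<dots> = (p * q) ^ (L1 div 2 + L2 div 2) * (f 0 + f 1)"
    by (simp only: sum_parity_shift)
  finally show ?thesis unfolding f_def sum_weight_double_pattern .
qed

lemma disjointed_alternating_event:
  assumes "1 \<le> i" "1 \<le> K"
  shows "disjointed (\<lambda>i. alternating_event i K) i =
    double_alternating_event (i - 1) 1 K - (\<Union>i'\<in>{i'. i' + K \<le> i}. alternating_event i' K)"
proof (rule set_eqI)
  fix \<omega>
  have "i - 1 + 1 = i" "alternates (\<lambda>j. Y j \<omega>) (i - 1) 1" using assms(1) alternates_trivial by simp_all
  then show "\<omega> \<in> disjointed (\<lambda>i. alternating_event i K) i \<longleftrightarrow>
      \<omega> \<in> double_alternating_event (i - 1) 1 K - (\<Union>i'\<in>{i'. i' + K \<le> i}. alternating_event i' K)"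
    using first_alternating_window_iff[OF assms, of "\<lambda>j. Y j \<omega>"]
    unfolding disjointed_def alternating_event_def double_alternating_event_def by auto
qed

lemma prob_exists_alternating_window_eq_sum:
  "prob {\<omega> \<in> space M. \<exists>i\<le>K. alternates (\<lambda>j. Y j \<omega>) i K} =
    (\<Sum>i\<in>{0..<K + 1}. prob (disjointed (\<lambda>i. alternating_event i K) i))"
proof -
  let ?D = "disjointed (\<lambda>i. alternating_event i K)"
  have "range ?D \<subseteq> events" by (rule sets.range_disjointed_sets) auto
  then have D_sets: "?D i \<in> events" for i by blast
  have "{\<omega> \<in> space M. \<exists>i\<le>K. alternates (\<lambda>j. Y j \<omega>) i K} = (\<Union>i\<le>K. alternating_event i K)"
    unfolding alternating_event_def by auto
  also have "\<dots> = (\<Union>i\<in>{0..<K + 1}. alternating_event i K)"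
    by (simp add: atLeast0LessThan lessThan_Suc_atMost)
  also have "\<dots> = (\<Union>i\<in>{0..<K + 1}. ?D i)" by (rule finite_UN_disjointed_eq[symmetric])
  finally have "prob {\<omega> \<in> space M. \<exists>i\<le>K. alternates (\<lambda>j. Y j \<omega>) i K} =
      prob (\<Union>i\<in>{0..<K + 1}. ?D i)" by simp
  also have "\<dots> = (\<Sum>i\<in>{0..<K + 1}. prob (?D i))"
    using D_sets disjoint_family_on_mono[OF subset_UNIV disjoint_family_disjointed]
    by (intro finite_measure_finite_Union) auto
  finally show ?thesis .
qed

lemma prob_disjointed_alternating_event_less:
  assumes "1 \<le> i" "i < K"
  shows "prob (disjointed (\<lambda>i. alternating_event i K) i) =
    (p * q) ^ (K div 2) * (if odd K then p\<^sup>2 + q\<^sup>2 else 1)"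
proof -
  have "{i'. i' + K \<le> i} = {}" using assms by auto
  then show ?thesis using assms
    by (simp add: disjointed_alternating_event prob_double_alternating_event)
qed

lemma prob_disjointed_alternating_event_last:
  assumes "1 \<le> K"
  shows "prob (disjointed (\<lambda>i. alternating_event i K) K) =
    (p * q) ^ (K div 2) * (if odd K then p\<^sup>2 + q\<^sup>2 else 1) -
    (p * q) ^ (2 * (K div 2)) * (if odd K then p\<^sup>2 + q\<^sup>2 else 2)"
proof -
  have "{i'. i' + K \<le> K} = {0}" by auto
  then have "disjointed (\<lambda>i. alternating_event i K) K =
      double_alternating_event (K - 1) 1 K - alternating_event 0 K"
    using assms by (simp add: disjointed_alternating_event)
  moreover have "double_alternating_event (K - 1) 1 K \<inter> alternating_event 0 K =
      double_alternating_event 0 K K"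
    using assms unfolding double_alternating_event_def alternating_event_def
    by (auto simp: alternates_def)
  ultimately have "prob (disjointed (\<lambda>i. alternating_event i K) K) =
      prob (double_alternating_event (K - 1) 1 K) - prob (double_alternating_event 0 K K)"
    by (simp add: finite_measure_Diff')
  then show ?thesis using assms by (simp add: prob_double_alternating_event mult_2)
qed

lemma p_square_plus_q_square: "p\<^sup>2 + q\<^sup>2 = 1 - 2 * p * q"
proof -
  have q: "q = 1 - p" using p_plus_q by linarith
  show ?thesis unfolding q power2_eq_square by (simp add: algebra_simps)
qed

lemma prob_exists_alternating_window:
  assumes K: "1 \<le> K"
  shows "prob {\<omega> \<in> space M. \<exists>i\<le>K. alternates (\<lambda>j. Y j \<omega>) i K} =
    (if even K
     then (K + 2) * (p*q) ^ (K div 2) - 2 * (p*q) ^ K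
     else (K + 1 - 2*K*p*q) * (p*q) ^ ((K - 1) div 2) - (1 - 2*p*q) * (p*q) ^ (K - 1))"
proof -
  let ?P = "\<lambda>i. prob (disjointed (\<lambda>i. alternating_event i K) i)"
  have "(\<Sum>i\<in>{0..<K + 1}. ?P i) = ?P 0 + (\<Sum>i\<in>{1..<K}. ?P i) + ?P K"
    using K by (simp add: sum.atLeast_Suc_lessThan)
  then have total: "prob {\<omega> \<in> space M. \<exists>i\<le>K. alternates (\<lambda>j. Y j \<omega>) i K} =
      (p * q) ^ (K div 2) * (if odd K then 1 else 2) +
      (K - 1) * ((p * q) ^ (K div 2) * (if odd K then p\<^sup>2 + q\<^sup>2 else 1)) +
      ((p * q) ^ (K div 2) * (if odd K then p\<^sup>2 + q\<^sup>2 else 1) -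
       (p * q) ^ (2 * (K div 2)) * (if odd K then p\<^sup>2 + q\<^sup>2 else 2))"
    using K by (simp add: prob_exists_alternating_window_eq_sum prob_alternating_event
        prob_disjointed_alternating_event_less prob_disjointed_alternating_event_last)
  show ?thesis
  proof (cases "even K")
    case True
    then have "2 * (K div 2) = K" by simp
    then show ?thesis unfolding total using True K by (simp add: of_nat_diff algebra_simps)
  next
    case False
    then have "2 * (K div 2) = K - 1" "(K - 1) div 2 = K div 2" by presburger+
    then show ?thesis unfolding total p_square_plus_q_square using False K by (simp add: of_nat_diff algebra_simps)
  qed
qed

end

lemma (in prob_space) bernoulli_sequence_indicator:
  fixes X :: "nat \<Rightarrow> 'a \<Rightarrow> nat"
  assumes meas: "\<And>i. i \<ge> 1 \<Longrightarrow> X i \<in> M \<rightarrow>\<^sub>M count_space UNIV"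
    and indep: "indep_vars (\<lambda>_. count_space UNIV) X {1..}"
    and prob_1: "\<And>i. i \<ge> 1 \<Longrightarrow> prob {\<omega> \<in> space M. X i \<omega> = 1} = p"
    and q: "q = 1 - p" and m: "1 \<le> m"
  shows "bernoulli_sequence M (\<lambda>j \<omega>. if X (m + j) \<omega> = 1 then 1 else 0) p q"
proof -
  have [measurable]: "X (m + j) \<in> M \<rightarrow>\<^sub>M count_space UNIV" for j using meas m by simp
  have meas_Y: "(\<lambda>\<omega>. if X (m + j) \<omega> = 1 then 1 else 0 :: nat) \<in> M \<rightarrow>\<^sub>M count_space UNIV" for j
    by measurable
  have sets_X_1: "{\<omega> \<in> space M. X (m + j) \<omega> = 1} \<in> events" for j by measurable
  have "indep_vars (\<lambda>_. count_space UNIV) X ((+) m ` UNIV)"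
    using m by (intro indep_vars_subset[OF indep]) auto
  then have "indep_vars (\<lambda>_. count_space UNIV) (\<lambda>j. X (m + j)) UNIV"
    using indep_vars_reindex[of "(+) m" UNIV] by (simp add: inj_on_def)
  then have indep_Y: "indep_vars (\<lambda>_. count_space UNIV) (\<lambda>j \<omega>. if X (m + j) \<omega> = 1 then 1 else 0 :: nat) UNIV"
    by (rule indep_vars_compose2) simp
  have prob_X: "prob {\<omega> \<in> space M. X (m + j) \<omega> = 1} = p" for j
    using prob_1 m by simp
  have "prob {\<omega> \<in> space M. (if X (m + j) \<omega> = 1 then 1 else 0) = (1::nat)} =
      prob {\<omega> \<in> space M. X (m + j) \<omega> = 1}" for j
    by (rule arg_cong[where f = prob]) auto
  then have prob_Y_1: "prob {\<omega> \<in> space M. (if X (m + j) \<omega> = 1 then 1 else 0) = (1::nat)} = p" for j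
    unfolding prob_X .
  have "prob {\<omega> \<in> space M. (if X (m + j) \<omega> = 1 then 1 else 0) = (0::nat)} =
      prob (space M - {\<omega> \<in> space M. X (m + j) \<omega> = 1})" for j
    by (rule arg_cong[where f = prob]) auto
  then have prob_Y_0: "prob {\<omega> \<in> space M. (if X (m + j) \<omega> = 1 then 1 else 0) = (0::nat)} = q" for j
    unfolding prob_compl[OF sets_X_1] prob_X q .
  show ?thesis
    by (intro bernoulli_sequence.intro bernoulli_sequence_axioms.intro prob_space_axioms
        meas_Y indep_Y prob_Y_1 prob_Y_0) simp
qed

lemma sets_longest_switches_ge:
  fixes X :: "nat \<Rightarrow> 'a \<Rightarrow> nat"
  assumes "\<And>i. 1 \<le> i \<Longrightarrow> X i \<in> M \<rightarrow>\<^sub>M count_space UNIV"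
    and "1 \<le> K" "1 \<le> m"
  shows "{\<omega> \<in> space M. K - 1 \<le> longest_switches (\<lambda>i. X i \<omega>) m (2 * K)} \<in> sets M"
proof -
  \<comment> \<open>X 0 need not be measurable, but the event only involves indices from m on.\<close>
  define X' where "X' i = X (max 1 i)" for i
  have [measurable]: "X' i \<in> M \<rightarrow>\<^sub>M count_space UNIV" for i
    unfolding X'_def by (rule assms(1)) simp
  have X_X': "longest_switches (\<lambda>i. X i \<omega>) m (2 * K) = longest_switches (\<lambda>i. X' i \<omega>) m (2 * K)" for \<omega>
    using assms(3) by (intro longest_switches_cong) (simp add: X'_def max_def)
  have "{\<omega> \<in> space M. K - 1 \<le> longest_switches (\<lambda>i. X i \<omega>) m (2 * K)} =
      {\<omega> \<in> space M. \<exists>n\<in>{K..2 * K}. \<exists>i\<in>{m..m + 2 * K - n}. switches (\<lambda>j. X' j \<omega>) i n = n - 1}"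
    unfolding X_X' longest_switches_ge_iff_H_event[OF assms(2)] H_event_def Bex_def atLeastAtMost_iff conj_assoc ..
  also have "\<dots> \<in> sets M" unfolding switches_def by measurable
  finally show ?thesis .
qed

theorem lemma3p2:
  fixes M :: "'a measure" and X :: "nat \<Rightarrow> 'a \<Rightarrow> nat"
    and p q :: real and K m :: nat
  assumes "prob_space M"
    and "0 < p" and "p < 1" and "q = 1 - p"
    and "\<And>i. i \<ge> 1 \<Longrightarrow> X i \<in> measurable M (count_space UNIV)"
    and "prob_space.indep_vars M (\<lambda>_. count_space UNIV) X {1..}"
    and "\<And>i. i \<ge> 1 \<Longrightarrow> measure M {\<omega> \<in> space M. X i \<omega> = 1} = p"
    and "\<And>i. i \<ge> 1 \<Longrightarrow> measure M {\<omega> \<in> space M. X i \<omega> = 0} = q"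
    and "K \<ge> 1" and "m \<ge> 1"
  shows "measure M {\<omega> \<in> space M. longest_switches (\<lambda>i. X i \<omega>) m (2*K) \<ge> K - 1} =
    (if even K
     then (K + 2) * (p*q) ^ (K div 2) - 2 * (p*q) ^ K
     else (K + 1 - 2*K*p*q) * (p*q) ^ ((K - 1) div 2) - (1 - 2*p*q) * (p*q) ^ (K - 1))"
proof -
  interpret prob_space M by (rule assms(1))
  \<comment> \<open>Y is 0/1-valued everywhere and agrees with the shifted X almost surely.\<close>
  define Y where "Y = (\<lambda>j \<omega>. if X (m + j) \<omega> = 1 then 1 else 0 :: nat)"
  interpret bernoulli_sequence M Y p q
    unfolding Y_def by (rule bernoulli_sequence_indicator[OF assms(5-7,4,10)])
  let ?T = "{\<omega> \<in> space M. K - 1 \<le> longest_switches (\<lambda>i. X i \<omega>) m (2*K)}"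
  let ?A = "{\<omega> \<in> space M. \<exists>i\<le>K. alternates (\<lambda>j. Y j \<omega>) i K}"
  have T_sets: "?T \<in> events" using assms(5,9,10) by (rule sets_longest_switches_ge)
  have A_sets: "?A \<in> events" unfolding alternates_iff_bounded by measurable
  have "AE \<omega> in M. X (m + j) \<omega> \<le> 1" for j
    using assms(4,5,7,8,10) by (intro AE_le_1) simp_all
  then have "AE \<omega> in M. \<forall>j\<in>{..<2 * K}. X (m + j) \<omega> \<le> 1" by (intro AE_finite_allI) simp_all
  then have "AE \<omega> in M. \<omega> \<in> ?T \<longleftrightarrow> \<omega> \<in> ?A"
  proof (rule eventually_mono)
    fix \<omega> assume bits: "\<forall>j\<in>{..<2 * K}. X (m + j) \<omega> \<le> 1"
    have "alternates (\<lambda>j. X (m + j) \<omega>) i K \<longleftrightarrow> alternates (\<lambda>j. Y j \<omega>) i K" if "i \<le> K" for i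
      using bits that by (intro alternates_cong) (auto simp: Y_def le_Suc_eq)
    then show "\<omega> \<in> ?T \<longleftrightarrow> \<omega> \<in> ?A"
      using longest_switches_ge_iff_alternates[OF assms(9)] bits by auto
  qed
  then have "prob ?T = prob ?A" using T_sets A_sets by (rule measure_eq_AE)
  then show ?thesis using prob_exists_alternating_window[OF assms(9)] by simp
qed

end
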